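(* Fix $n\ge1$, a sample $x_1,\dots,x_n\in\mathbb{X}$ and $\epsilon\in(0,1]$, and suppose $\Gamma_\epsilon$ is nonempty and $\Gamma_\epsilon\subset A_\mu$ (so $\mu(\Gamma_\epsilon)>0$). Let $\mu_\epsilon=\mu(\cdot\mid\Gamma_\epsilon)$. Then $$D(\mu_\epsilon\|\hat\mu_{n,\epsilon})\le\frac{2\log(e/\epsilon)}{\mu(\Gamma_\epsilon)}\,V(\mu/\sigma_\epsilon,\hat\mu_n/\sigma_\epsilon).$$
   Context: $\mathbb{X}$ is a countably infinite set, $\mu$ a probability on $\mathbb{X}$ with pmf $f_\mu(x)=\mu(\{x\})$ and support $A_\mu=\{x:f_\mu(x)>0\}$. $\log$ is the logarithm to a fixed base $b>1$. I-divergence: $D(\mu\|\nu)=\sum_{x\in A_\mu}f_\mu(x)\log\frac{f_\mu(x)}{f_\nu(x)}$ if $\mu\ll\nu$, $+\infty$ otherwise. For the sample $x_1,\dots,x_n$, $\hat\mu_n(A)=\frac1n\sum_{k}\mathbb{1}_A(x_k)$; $\Gamma_\epsilon=\{x:\hat\mu_n(\{x\})\ge\epsilon\}$; $\hat\mu_{n,\epsilon}=\hat\mu_n(\cdot\mid\Gamma_\epsilon)$. $\sigma_\epsilon$ is the (finite) $\sigma$-field generated by the partition $\Pi_\epsilon=\{\{x\}:x\in\Gamma_\epsilon\}\cup\{\mathbb{X}\setminus\Gamma_\epsilon\}$, and $V(\mu/\sigma_\epsilon,\hat\mu_n/\sigma_\epsilon)=\sup_{A\in\sigma_\epsilon}|\mu(A)-\hat\mu_n(A)|$.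 *)

theory Defs
  imports "HOL-Probability.Probability"
begin

definition empirical :: "'a list \<Rightarrow> 'a pmf" where
  "empirical xs = pmf_of_multiset (mset xs)"

definition Gamma_eps :: "'a list \<Rightarrow> real \<Rightarrow> 'a set" where
  "Gamma_eps xs \<epsilon> = {x. measure_pmf.prob (empirical xs) {x} \<ge> \<epsilon>}"

definition Pi_part :: "'a set \<Rightarrow> 'a set set" where
  "Pi_part G = (\<lambda>x. {x}) ` G \<union> {UNIV - G}"

definition sigma_eps :: "'a set \<Rightarrow> 'a set set" where
  "sigma_eps G = sigma_sets UNIV (Pi_part G)"

definition Vdist :: "'a pmf \<Rightarrow> 'a pmf \<Rightarrow> 'a set \<Rightarrow> real" where
  "Vdist \<mu> \<nu> G = (SUP A \<in> sigma_eps G. \<bar>measure_pmf.prob \<mu> A - measure_pmf.prob \<nu> A\<bar>)"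

text \<open>I-divergence with logarithm to base b (value in [0,+infinity]).
  The negative parts of the series are always summable, so a non-summable
  series diverges to +infinity.\<close>
definition I_div :: "real \<Rightarrow> 'a pmf \<Rightarrow> 'a pmf \<Rightarrow> ereal" where
  "I_div b \<mu> \<nu> =
     (if set_pmf \<mu> \<subseteq> set_pmf \<nu> then
        (if (\<lambda>x. pmf \<mu> x * log b (pmf \<mu> x / pmf \<nu> x)) summable_on set_pmf \<mu>
         then ereal (\<Sum>\<^sub>\<infinity>x\<in>set_pmf \<mu>. pmf \<mu> x * log b (pmf \<mu> x / pmf \<nu> x))
         else \<infinity>)
      else \<infinity>)"

end

theory Submission
  imports Defs
begin

text \<open>On \<open>\<Gamma>\<^sub>\<epsilon>\<close> the conditioned empirical pmf is at least \<open>\<epsilon>\<close>, and every pmf is at most 1, so the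
  elementary estimate \<open>p ln (p/q) \<le> (p - q)\<^sup>+ ln (e/\<epsilon>)\<close> bounds the divergence by \<open>log (e/\<epsilon>)\<close>
  times the excess mass \<open>\<mu>\<^sub>\<epsilon>(A) - \<nu>\<^sub>\<epsilon>(A)\<close> of the set \<open>A\<close> where \<open>\<mu>\<^sub>\<epsilon>\<close> dominates. Both \<open>A\<close> and
  \<open>\<Gamma>\<^sub>\<epsilon>\<close> are finite subsets of \<open>\<Gamma>\<^sub>\<epsilon>\<close>, hence lie in \<open>\<sigma>\<^sub>\<epsilon>\<close>; comparing \<open>\<mu>(A)/\<mu>(\<Gamma>\<^sub>\<epsilon>)\<close> with
  \<open>\<nu>(A)/\<nu>(\<Gamma>\<^sub>\<epsilon>)\<close> therefore costs one \<open>V\<close> for the numerators and one for the denominators.\<close>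

lemma mult_ln_divide_le_pos_part:
  fixes p q e :: real
  assumes "0 < p" "p \<le> 1" "0 < e" "e \<le> q"
  shows "p * ln (p / q) \<le> max (p - q) 0 * (1 + ln (1 / e))"
proof (cases "p \<le> q")
  case True
  then have "ln (p / q) \<le> 0" using assms by simp
  then show ?thesis using True assms by (simp add: mult_nonneg_nonpos)
next
  case False
  have q: "0 < q" using assms by simp
  have "q * ln (p / q) \<le> q * (p / q - 1)"
    using q assms by (intro mult_left_mono ln_le_minus_one) auto
  then have ln_le: "q * ln (p / q) \<le> p - q"
    using q by (simp add: algebra_simps)
  have "p / q \<le> 1 / e" using assms q by (intro frac_le) auto
  then have "ln (p / q) \<le> ln (1 / e)" using assms q by (intro ln_mono) auto
  then have "(p - q) * ln (p / q) + q * ln (p / q) \<le> (p - q) * ln (1 / e) + (p - q)"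
    using ln_le False by (intro add_mono mult_left_mono) auto
  then show ?thesis using False by (simp add: algebra_simps)
qed

lemma I_div_finite_support:
  assumes "finite (set_pmf \<mu>)" "set_pmf \<mu> \<subseteq> set_pmf \<nu>"
  shows "I_div b \<mu> \<nu> = ereal (\<Sum>x\<in>set_pmf \<mu>. pmf \<mu> x * log b (pmf \<mu> x / pmf \<nu> x))"
  unfolding I_div_def using assms by (simp add: infsum_finite)

lemma I_div_le_excess_mass:
  fixes P Q :: "'a pmf"
  assumes b: "b > 1" and fin: "finite (set_pmf P)" and \<epsilon>: "0 < \<epsilon>"
    and Q_ge: "\<And>x. x \<in> set_pmf P \<Longrightarrow> \<epsilon> \<le> pmf Q x"
  defines "A \<equiv> {x \<in> set_pmf P. pmf Q x < pmf P x}"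
  shows "I_div b P Q \<le> ereal (log b (exp 1 / \<epsilon>) * (measure_pmf.prob P A - measure_pmf.prob Q A))"
proof -
  let ?S = "set_pmf P"
  have sub: "?S \<subseteq> set_pmf Q" using Q_ge \<epsilon> by (force simp: set_pmf_iff)
  have A: "A \<subseteq> ?S" "finite A" using fin finite_subset by (auto simp: A_def)
  have "(\<Sum>x\<in>?S. max (pmf P x - pmf Q x) 0) = (\<Sum>x\<in>A. max (pmf P x - pmf Q x) 0)"
    using fin A by (intro sum.mono_neutral_right) (auto simp: A_def)
  also have "\<dots> = (\<Sum>x\<in>A. pmf P x - pmf Q x)"
    by (rule sum.cong) (auto simp: A_def)
  also have "\<dots> = measure_pmf.prob P A - measure_pmf.prob Q A"
    using A by (simp add: measure_measure_pmf_finite sum_subtractf)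
  finally have excess: "(\<Sum>x\<in>?S. max (pmf P x - pmf Q x) 0)
      = measure_pmf.prob P A - measure_pmf.prob Q A" .
  have "(\<Sum>x\<in>?S. pmf P x * ln (pmf P x / pmf Q x))
        \<le> (\<Sum>x\<in>?S. max (pmf P x - pmf Q x) 0 * (1 + ln (1 / \<epsilon>)))"
    using \<epsilon> Q_ge by (intro sum_mono mult_ln_divide_le_pos_part) (auto simp: pmf_le_1 pmf_positive)
  also have "\<dots> = (1 + ln (1 / \<epsilon>)) * (measure_pmf.prob P A - measure_pmf.prob Q A)"
    by (simp add: excess sum_distrib_left[symmetric] mult.commute)
  finally have "(\<Sum>x\<in>?S. pmf P x * log b (pmf P x / pmf Q x))
      \<le> (1 + ln (1 / \<epsilon>)) / ln b * (measure_pmf.prob P A - measure_pmf.prob Q A)"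
    using b unfolding log_def by (simp add: sum_divide_distrib[symmetric] divide_right_mono)
  also have "(1 + ln (1 / \<epsilon>)) / ln b = log b (exp 1 / \<epsilon>)"
    using \<epsilon> by (simp add: log_def ln_div)
  finally show ?thesis using I_div_finite_support[OF fin sub] by simp
qed

lemma finite_subset_in_sigma_eps:
  assumes "finite A" "A \<subseteq> G"
  shows "A \<in> sigma_eps G"
  using assms
proof (induction A rule: finite_induct)
  case empty
  show ?case unfolding sigma_eps_def by (rule sigma_sets.Empty)
next
  case (insert x F)
  have "{x} \<in> sigma_eps G" unfolding sigma_eps_def Pi_part_def
    using insert.prems by (intro sigma_sets.Basic) auto
  with insert have "{x} \<union> F \<in> sigma_eps G" unfolding sigma_eps_def by (intro sigma_sets_Un) auto
  then show ?case by simp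
qed

lemma abs_prob_diff_le_Vdist:
  assumes "finite A" "A \<subseteq> G"
  shows "\<bar>measure_pmf.prob \<mu> A - measure_pmf.prob \<nu> A\<bar> \<le> Vdist \<mu> \<nu> G"
  unfolding Vdist_def
proof (rule cSUP_upper[OF finite_subset_in_sigma_eps[OF assms]])
  have "\<bar>measure_pmf.prob \<mu> B - measure_pmf.prob \<nu> B\<bar> \<le> 1" for B
    by (simp add: abs_le_iff) (smt (verit) measure_pmf.prob_le_1 measure_nonneg)
  then show "bdd_above ((\<lambda>B. \<bar>measure_pmf.prob \<mu> B - measure_pmf.prob \<nu> B\<bar>) ` sigma_eps G)"
    by (intro bdd_aboveI) auto
qed

lemma ratio_diff_le:
  fixes mA nA mG nG V :: real
  assumes "0 < mG" "0 < nG" "0 \<le> nA" "nA \<le> nG"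
    and "\<bar>mA - nA\<bar> \<le> V" "\<bar>mG - nG\<bar> \<le> V"
  shows "mA / mG - nA / nG \<le> 2 * V / mG"
proof -
  have r: "0 \<le> nA / nG" "nA / nG \<le> 1" using assms by auto
  have "(nA / nG) * (nG - mG) \<le> (nA / nG) * \<bar>nG - mG\<bar>"
    using r by (intro mult_left_mono) auto
  also have "\<dots> \<le> \<bar>nG - mG\<bar>"
    using r mult_right_mono[of "nA / nG" 1 "\<bar>nG - mG\<bar>"] by simp
  finally have "(nA / nG) * (nG - mG) \<le> \<bar>nG - mG\<bar>" .
  moreover have "mA - nA \<le> V" "\<bar>nG - mG\<bar> \<le> V"
    using assms by (auto simp: abs_minus_commute)
  ultimately have "(mA - nA) + (nA / nG) * (nG - mG) \<le> 2 * V"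
    by linarith
  moreover have "mA / mG - nA / nG = ((mA - nA) + (nA / nG) * (nG - mG)) / mG"
    using assms by (simp add: field_simps)
  ultimately show ?thesis using assms by (simp add: divide_right_mono)
qed

lemma measure_cond_pmf_finite:
  assumes "set_pmf p \<inter> s \<noteq> {}" "finite A" "A \<subseteq> s"
  shows "measure_pmf.prob (cond_pmf p s) A = measure_pmf.prob p A / measure_pmf.prob p s"
  using assms by (auto simp: measure_measure_pmf_finite pmf_cond sum_divide_distrib intro!: sum.cong)

lemma cond_prob_diff_le_Vdist:
  assumes "finite G" "set_pmf \<mu> \<inter> G \<noteq> {}" "set_pmf \<nu> \<inter> G \<noteq> {}" "A \<subseteq> G"
  shows "measure_pmf.prob (cond_pmf \<mu> G) A - measure_pmf.prob (cond_pmf \<nu> G) A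
         \<le> 2 * Vdist \<mu> \<nu> G / measure_pmf.prob \<mu> G"
proof -
  have A: "finite A" using assms finite_subset by blast
  show ?thesis
    unfolding measure_cond_pmf_finite[OF assms(2) A assms(4)] measure_cond_pmf_finite[OF assms(3) A assms(4)]
  proof (rule ratio_diff_le)
    show "0 < measure_pmf.prob \<mu> G" "0 < measure_pmf.prob \<nu> G"
      using assms(2,3) by (auto intro: measure_pmf_posI)
    show "measure_pmf.prob \<nu> A \<le> measure_pmf.prob \<nu> G"
      using assms by (intro measure_pmf.finite_measure_mono) auto
    show "\<bar>measure_pmf.prob \<mu> A - measure_pmf.prob \<nu> A\<bar> \<le> Vdist \<mu> \<nu> G"
      using A assms(4) by (rule abs_prob_diff_le_Vdist)
    show "\<bar>measure_pmf.prob \<mu> G - measure_pmf.prob \<nu> G\<bar> \<le> Vdist \<mu> \<nu> G"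
      using assms(1) by (rule abs_prob_diff_le_Vdist) simp
  qed simp
qed

lemma pmf_le_pmf_cond_pmf:
  assumes "set_pmf p \<inter> s \<noteq> {}" "x \<in> s"
  shows "pmf p x \<le> pmf (cond_pmf p s) x"
proof -
  have "0 < measure_pmf.prob p s" using assms(1) by (auto intro: measure_pmf_posI)
  then have "pmf p x \<le> pmf p x / measure_pmf.prob p s"
    using measure_pmf.prob_le_1[of p s] by (simp add: le_divide_eq mult_left_le pmf_nonneg)
  then show ?thesis using assms by (simp add: pmf_cond)
qed

lemma I_div_cond_pmf_le_Vdist:
  assumes b: "b > 1" and fin: "finite G" and \<mu>: "set_pmf \<mu> \<inter> G \<noteq> {}"
    and \<epsilon>: "0 < \<epsilon>" and \<nu>_ge: "\<And>x. x \<in> G \<Longrightarrow> \<epsilon> \<le> pmf \<nu> x"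
  shows "I_div b (cond_pmf \<mu> G) (cond_pmf \<nu> G)
         \<le> ereal (2 * log b (exp 1 / \<epsilon>) / measure_pmf.prob \<mu> G * Vdist \<mu> \<nu> G)"
proof -
  obtain x where x: "x \<in> G" using \<mu> by blast
  have "x \<in> set_pmf \<nu>" using \<nu>_ge[OF x] \<epsilon> by (simp add: set_pmf_iff)
  then have \<nu>: "set_pmf \<nu> \<inter> G \<noteq> {}" using x by blast
  have "\<epsilon> \<le> 1" using \<nu>_ge[OF x] pmf_le_1[of \<nu> x] by linarith
  then have log_nonneg: "0 \<le> log b (exp 1 / \<epsilon>)"
    using b \<epsilon> by (simp add: le_divide_eq) (smt (verit) exp_ge_add_one_self)
  have supp: "set_pmf (cond_pmf \<mu> G) \<subseteq> G" using set_cond_pmf[OF \<mu>] by blast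
  define A where "A = {x \<in> set_pmf (cond_pmf \<mu> G). pmf (cond_pmf \<nu> G) x < pmf (cond_pmf \<mu> G) x}"
  have "A \<subseteq> G" using supp by (auto simp: A_def)
  have "I_div b (cond_pmf \<mu> G) (cond_pmf \<nu> G) \<le> ereal (log b (exp 1 / \<epsilon>)
          * (measure_pmf.prob (cond_pmf \<mu> G) A - measure_pmf.prob (cond_pmf \<nu> G) A))"
    unfolding A_def using b \<epsilon> finite_subset[OF supp fin] supp
    by (intro I_div_le_excess_mass order_trans[OF \<nu>_ge pmf_le_pmf_cond_pmf[OF \<nu>]]) auto
  also have "\<dots> \<le> ereal (log b (exp 1 / \<epsilon>) * (2 * Vdist \<mu> \<nu> G / measure_pmf.prob \<mu> G))"
    unfolding ereal_less_eq(3)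
    by (rule mult_left_mono[OF cond_prob_diff_le_Vdist[OF fin \<mu> \<nu> \<open>A \<subseteq> G\<close>] log_nonneg])
  finally show ?thesis by (simp add: mult_ac)
qed

lemma Gamma_eps_subset_set_pmf_empirical:
  assumes "0 < \<epsilon>"
  shows "Gamma_eps xs \<epsilon> \<subseteq> set_pmf (empirical xs)"
  using assms by (force simp: Gamma_eps_def measure_pmf_single set_pmf_iff)

theorem mainTheorem11:
  fixes \<mu> :: "'a::countable pmf" and xs :: "'a list" and n :: nat and \<epsilon> b :: real
  assumes "infinite (UNIV :: 'a set)"
    and "b > 1"
    and "length xs = n" and "n \<ge> 1"
    and "0 < \<epsilon>" and "\<epsilon> \<le> 1"
    and "Gamma_eps xs \<epsilon> \<noteq> {}"
    and "Gamma_eps xs \<epsilon> \<subseteq> set_pmf \<mu>"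
  shows "I_div b (cond_pmf \<mu> (Gamma_eps xs \<epsilon>)) (cond_pmf (empirical xs) (Gamma_eps xs \<epsilon>))
         \<le> ereal (2 * log b (exp 1 / \<epsilon>) / measure_pmf.prob \<mu> (Gamma_eps xs \<epsilon>)
                   * Vdist \<mu> (empirical xs) (Gamma_eps xs \<epsilon>))"
proof (rule I_div_cond_pmf_le_Vdist)
  have "xs \<noteq> []" using assms(3,4) by auto
  then have "set_pmf (empirical xs) = set xs" by (simp add: empirical_def)
  then show "finite (Gamma_eps xs \<epsilon>)"
    using finite_subset[OF Gamma_eps_subset_set_pmf_empirical[where xs = xs, OF assms(5)]] by simp
  show "set_pmf \<mu> \<inter> Gamma_eps xs \<epsilon> \<noteq> {}" using assms(7,8) by blast
  show "\<epsilon> \<le> pmf (empirical xs) x" if "x \<in> Gamma_eps xs \<epsilon>" for x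
    using that by (simp add: Gamma_eps_def measure_pmf_single)
qed (use assms(2,5) in auto)

end
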